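(* Let $X$ be a finite alphabet and let $M_1, M_2$ be monoids with monoid choices of generators $\sigma_1 : X^* \to M_1$ and $\sigma_2 : X^* \to M_2$. If $L_{\sigma_1}(M_1) = L_{\sigma_2}(M_2)$, then there is a monoid isomorphism $\rho : M_1 \to M_2$ such that $\sigma_1\rho = \sigma_2$ (i.e. $(w\sigma_1)\rho = w\sigma_2$ for all $w \in X^*$). The corresponding statement holds for semigroups $S_1, S_2$ with semigroup choices of generators $\sigma_1 : X^+ \to S_1$, $\sigma_2 : X^+ \to S_2$ (with a semigroup isomorphism $\rho$).
   Context: Maps are written on the right and composed left to right. $X^*$, $X^+$: free monoid and free semigroup on $X$. Let $\overline{X} = \{\overline{x} : x \in X\}$ be new symbols, $\hat{X} = X \cup \overline{X}$. For a monoid $M$ and surjective monoid morphism $\sigma : X^* \to M$, the loop automaton has vertex set $M$, for each $a \in M$, $x \in X$ an edge $a \to a(x\sigma)$ labelled $x$ and an edge $a(x\sigma) \to a$ labelled $\overline{x}$; the loop problem $L_\sigma(M) \subseteq \hat{X}^*$ is the set of labels of paths from the identity to the identity. For a semigroup $S$ and surjective morphism $\sigma : X^+ \to S$, $L_\sigma(S)$ is the loop problem of $S^1$ ($S$ with a new identity adjoined, even if one exists) with respect to the unique extension $\sigma^1 : X^* \to S^1$. *)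

theory Defs
  imports "HOL-Algebra.Group"
begin

(* Letters of \<hat>X = X \<union> \<overline>X : Pos x stands for x, Neg x for \<overline>x *)
datatype 'x hatlet = Pos 'x | Neg 'x

definition hat :: "'x set \<Rightarrow> 'x hatlet set" where
  "hat X = Pos ` X \<union> Neg ` X"

(* \<sigma> : X^* \<rightarrow> M is a surjective monoid morphism (a monoid choice of generators);
   X^* is rendered as lists X, maps are applied as ordinary functions *)
definition monoid_choice :: "'x set \<Rightarrow> ('m, 'r) monoid_scheme \<Rightarrow> ('x list \<Rightarrow> 'm) \<Rightarrow> bool" where
  "monoid_choice X M \<sigma> \<longleftrightarrow>
     monoid M \<and>
     (\<forall>w \<in> lists X. \<sigma> w \<in> carrier M) \<and>
     \<sigma> [] = \<one>\<^bsub>M\<^esub> \<and>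
     (\<forall>u \<in> lists X. \<forall>v \<in> lists X. \<sigma> (u @ v) = \<sigma> u \<otimes>\<^bsub>M\<^esub> \<sigma> v) \<and>
     \<sigma> ` lists X = carrier M"

(* a semigroup: associative closed multiplication on the carrier (the 'one' field is ignored) *)
definition is_semigroup :: "('m, 'r) monoid_scheme \<Rightarrow> bool" where
  "is_semigroup S \<longleftrightarrow>
     (\<forall>x \<in> carrier S. \<forall>y \<in> carrier S. x \<otimes>\<^bsub>S\<^esub> y \<in> carrier S) \<and>
     (\<forall>x \<in> carrier S. \<forall>y \<in> carrier S. \<forall>z \<in> carrier S.
        (x \<otimes>\<^bsub>S\<^esub> y) \<otimes>\<^bsub>S\<^esub> z = x \<otimes>\<^bsub>S\<^esub> (y \<otimes>\<^bsub>S\<^esub> z))"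

definition plus_words :: "'x set \<Rightarrow> 'x list set" where
  "plus_words X = lists X - {[]}"

(* \<sigma> : X^+ \<rightarrow> S is a surjective semigroup morphism (values on [] are irrelevant) *)
definition semigroup_choice :: "'x set \<Rightarrow> ('m, 'r) monoid_scheme \<Rightarrow> ('x list \<Rightarrow> 'm) \<Rightarrow> bool" where
  "semigroup_choice X S \<sigma> \<longleftrightarrow>
     is_semigroup S \<and>
     (\<forall>w \<in> plus_words X. \<sigma> w \<in> carrier S) \<and>
     (\<forall>u \<in> plus_words X. \<forall>v \<in> plus_words X. \<sigma> (u @ v) = \<sigma> u \<otimes>\<^bsub>S\<^esub> \<sigma> v) \<and>
     \<sigma> ` plus_words X = carrier S"

(* paths in the loop automaton of (M, \<sigma>): edge a \<rightarrow> a(x\<sigma>) labelled x,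
   edge a(x\<sigma>) \<rightarrow> a labelled \<overline>x, for a \<in> M, x \<in> X *)
inductive loop_path :: "'x set \<Rightarrow> ('m, 'r) monoid_scheme \<Rightarrow> ('x list \<Rightarrow> 'm)
    \<Rightarrow> 'm \<Rightarrow> 'x hatlet list \<Rightarrow> 'm \<Rightarrow> bool"
  for X M \<sigma> where
  nil: "a \<in> carrier M \<Longrightarrow> loop_path X M \<sigma> a [] a"
| pos: "\<lbrakk>a \<in> carrier M; x \<in> X; loop_path X M \<sigma> (a \<otimes>\<^bsub>M\<^esub> \<sigma> [x]) w b\<rbrakk>
        \<Longrightarrow> loop_path X M \<sigma> a (Pos x # w) b"
| neg: "\<lbrakk>a \<in> carrier M; x \<in> X; loop_path X M \<sigma> a w b\<rbrakk>
        \<Longrightarrow> loop_path X M \<sigma> (a \<otimes>\<^bsub>M\<^esub> \<sigma> [x]) (Neg x # w) b"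

definition loop_problem :: "'x set \<Rightarrow> ('m, 'r) monoid_scheme \<Rightarrow> ('x list \<Rightarrow> 'm) \<Rightarrow> 'x hatlet list set" where
  "loop_problem X M \<sigma> = {w \<in> lists (hat X). loop_path X M \<sigma> \<one>\<^bsub>M\<^esub> w \<one>\<^bsub>M\<^esub>}"

(* S^1: S with a new identity None adjoined *)
definition adjoin_one :: "('m, 'r) monoid_scheme \<Rightarrow> 'm option monoid" where
  "adjoin_one S = \<lparr>carrier = insert None (Some ` carrier S),
     mult = (\<lambda>a b. case a of None \<Rightarrow> b
                      | Some x \<Rightarrow> (case b of None \<Rightarrow> Some x | Some y \<Rightarrow> Some (x \<otimes>\<^bsub>S\<^esub> y))),
     one = None\<rparr>"

definition ext_one :: "('x list \<Rightarrow> 'm) \<Rightarrow> 'x list \<Rightarrow> 'm option" where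
  "ext_one \<sigma> w = (if w = [] then None else Some (\<sigma> w))"

definition semigroup_loop_problem :: "'x set \<Rightarrow> ('m, 'r) monoid_scheme \<Rightarrow> ('x list \<Rightarrow> 'm) \<Rightarrow> 'x hatlet list set" where
  "semigroup_loop_problem X S \<sigma> = loop_problem X (adjoin_one S) (ext_one \<sigma>)"

end

theory Submission
  imports Defs
begin

(* In the loop automaton, reading u from the identity leads to u\<sigma>, and reading the
   barred letters of v in reverse order leads from a vertex a back to the identity iff
   a = v\<sigma>.  Hence the word u followed by the reversed bar of v lies in L\<^sub>\<sigma>(M) iff
   u\<sigma> = v\<sigma>: the loop problem determines the kernel of \<sigma>, and a surjective morphism
   is determined up to isomorphism by its kernel.  For semigroups, apply this to
   \<sigma>\<^sup>1, whose kernel on nonempty words is that of \<sigma>. *)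

lemma iso_of_surjections_with_same_kernel:
  assumes W_closed: "\<And>u v. u \<in> W \<Longrightarrow> v \<in> W \<Longrightarrow> mul u v \<in> W"
    and f_onto: "f ` W = carrier A" and g_onto: "g ` W = carrier B"
    and f_mult: "\<And>u v. u \<in> W \<Longrightarrow> v \<in> W \<Longrightarrow> f (mul u v) = f u \<otimes>\<^bsub>A\<^esub> f v"
    and g_mult: "\<And>u v. u \<in> W \<Longrightarrow> v \<in> W \<Longrightarrow> g (mul u v) = g u \<otimes>\<^bsub>B\<^esub> g v"
    and same_kernel: "\<And>u v. u \<in> W \<Longrightarrow> v \<in> W \<Longrightarrow> f u = f v \<longleftrightarrow> g u = g v"
  shows "\<exists>\<rho> \<in> iso A B. \<forall>w \<in> W. \<rho> (f w) = g w"
proof -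
  define \<rho> where "\<rho> = (\<lambda>a. g (inv_into W f a))"
  have \<rho>_f: "\<rho> (f w) = g w" if "w \<in> W" for w
  proof -
    have "inv_into W f (f w) \<in> W" "f (inv_into W f (f w)) = f w"
      using that by (auto intro: inv_into_into f_inv_into_f)
    then show ?thesis unfolding \<rho>_def using same_kernel that by blast
  qed
  have "\<rho> \<in> hom A B"
  proof (rule homI)
    fix a b assume "a \<in> carrier A" "b \<in> carrier A"
    then obtain u v where "u \<in> W" "v \<in> W" "a = f u" "b = f v"
      using f_onto by blast
    then show "\<rho> (a \<otimes>\<^bsub>A\<^esub> b) = \<rho> a \<otimes>\<^bsub>B\<^esub> \<rho> b"
      by (simp add: \<rho>_f W_closed f_mult g_mult flip: f_mult)
  next
    fix a assume "a \<in> carrier A"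
    then obtain u where "u \<in> W" "a = f u"
      using f_onto by blast
    then show "\<rho> a \<in> carrier B"
      using g_onto \<rho>_f by blast
  qed
  moreover have "inj_on \<rho> (carrier A)"
  proof (rule inj_onI)
    fix a b assume "a \<in> carrier A" "b \<in> carrier A" "\<rho> a = \<rho> b"
    moreover obtain u v where "u \<in> W" "v \<in> W" "a = f u" "b = f v"
      using f_onto \<open>a \<in> carrier A\<close> \<open>b \<in> carrier A\<close> by blast
    ultimately show "a = b"
      using \<rho>_f same_kernel by metis
  qed
  moreover have "\<rho> ` carrier A = carrier B"
  proof -
    have "\<rho> ` carrier A = (\<lambda>w. \<rho> (f w)) ` W"
      by (simp flip: f_onto add: image_image)
    also have "\<dots> = carrier B"
      using \<rho>_f g_onto by (auto intro: image_cong)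
    finally show ?thesis .
  qed
  ultimately show ?thesis
    unfolding iso_def bij_betw_def using \<rho>_f by blast
qed

lemma monoid_choiceD:
  assumes "monoid_choice X M \<sigma>"
  shows "monoid M"
    and "w \<in> lists X \<Longrightarrow> \<sigma> w \<in> carrier M"
    and "\<sigma> [] = \<one>\<^bsub>M\<^esub>"
    and "u \<in> lists X \<Longrightarrow> v \<in> lists X \<Longrightarrow> \<sigma> (u @ v) = \<sigma> u \<otimes>\<^bsub>M\<^esub> \<sigma> v"
    and "\<sigma> ` lists X = carrier M"
  using assms unfolding monoid_choice_def by blast+

lemma semigroup_choiceD:
  assumes "semigroup_choice X S \<tau>"
  shows "is_semigroup S"
    and "w \<in> plus_words X \<Longrightarrow> \<tau> w \<in> carrier S"
    and "u \<in> plus_words X \<Longrightarrow> v \<in> plus_words X \<Longrightarrow> \<tau> (u @ v) = \<tau> u \<otimes>\<^bsub>S\<^esub> \<tau> v"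
    and "\<tau> ` plus_words X = carrier S"
  using assms unfolding semigroup_choice_def by blast+

inductive_simps loop_path_Nil_iff: "loop_path X M \<sigma> a [] b"
inductive_simps loop_path_Pos_iff: "loop_path X M \<sigma> a (Pos x # w) b"
inductive_simps loop_path_Neg_iff: "loop_path X M \<sigma> a (Neg x # w) b"

lemma loop_path_map_Pos_append:
  assumes \<sigma>: "monoid_choice X M \<sigma>" and "u \<in> lists X" and "a \<in> carrier M"
  shows "loop_path X M \<sigma> a (map Pos u @ w) b \<longleftrightarrow> loop_path X M \<sigma> (a \<otimes>\<^bsub>M\<^esub> \<sigma> u) w b"
  using assms(2,3)
proof (induction u arbitrary: a rule: lists.induct)
  case Nil
  then show ?case
    using monoid.r_one[OF monoid_choiceD(1)[OF \<sigma>]] by (simp add: monoid_choiceD(3)[OF \<sigma>])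
next
  case (Cons x u)
  interpret monoid M using monoid_choiceD(1)[OF \<sigma>] .
  from Cons.hyps have "\<sigma> (x # u) = \<sigma> [x] \<otimes>\<^bsub>M\<^esub> \<sigma> u"
    using monoid_choiceD(4)[OF \<sigma>, of "[x]" u] by simp
  moreover have "\<sigma> [x] \<in> carrier M" "\<sigma> u \<in> carrier M"
    using Cons.hyps monoid_choiceD(2)[OF \<sigma>] by auto
  ultimately show ?case
    using Cons by (simp add: loop_path_Pos_iff m_assoc)
qed

lemma loop_path_rev_map_Neg:
  assumes \<sigma>: "monoid_choice X M \<sigma>" and "v \<in> lists X"
  shows "loop_path X M \<sigma> b (rev (map Neg v)) c \<longleftrightarrow> c \<in> carrier M \<and> b = c \<otimes>\<^bsub>M\<^esub> \<sigma> v"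
  using assms(2)
proof (induction v arbitrary: b rule: rev_induct)
  case Nil
  then show ?case
    using monoid.r_one[OF monoid_choiceD(1)[OF \<sigma>]]
    by (auto simp: loop_path_Nil_iff monoid_choiceD(3)[OF \<sigma>])
next
  case (snoc x v)
  interpret monoid M using monoid_choiceD(1)[OF \<sigma>] .
  have "x \<in> X" "v \<in> lists X" using snoc.prems by auto
  then have "\<sigma> [x] \<in> carrier M" "\<sigma> v \<in> carrier M" "\<sigma> (v @ [x]) = \<sigma> v \<otimes>\<^bsub>M\<^esub> \<sigma> [x]"
    using monoid_choiceD(2,4)[OF \<sigma>] by auto
  then show ?case
    using snoc \<open>x \<in> X\<close> by (auto simp: loop_path_Neg_iff m_assoc)
qed

lemma in_loop_problem_iff_eq:
  assumes \<sigma>: "monoid_choice X M \<sigma>" and "u \<in> lists X" "v \<in> lists X"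
  shows "map Pos u @ rev (map Neg v) \<in> loop_problem X M \<sigma> \<longleftrightarrow> \<sigma> u = \<sigma> v"
proof -
  interpret monoid M using monoid_choiceD(1)[OF \<sigma>] .
  have "map Pos u @ rev (map Neg v) \<in> lists (hat X)"
    using assms(2,3) unfolding hat_def by auto
  moreover have "\<sigma> u \<in> carrier M" "\<sigma> v \<in> carrier M"
    using assms(2,3) monoid_choiceD(2)[OF \<sigma>] by auto
  ultimately show ?thesis
    unfolding loop_problem_def
    by (simp add: loop_path_map_Pos_append[OF \<sigma> \<open>u \<in> lists X\<close>] loop_path_rev_map_Neg[OF \<sigma> \<open>v \<in> lists X\<close>])
qed

lemma same_kernel_if_loop_problem_eq:
  assumes \<sigma>1: "monoid_choice X M1 \<sigma>1" and \<sigma>2: "monoid_choice X M2 \<sigma>2"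
    and L: "loop_problem X M1 \<sigma>1 = loop_problem X M2 \<sigma>2"
    and "u \<in> lists X" "v \<in> lists X"
  shows "\<sigma>1 u = \<sigma>1 v \<longleftrightarrow> \<sigma>2 u = \<sigma>2 v"
  using in_loop_problem_iff_eq[OF \<sigma>1, of u v] in_loop_problem_iff_eq[OF \<sigma>2, of u v] L assms(4,5)
  by simp

lemma monoid_choice_iso_if_loop_problem_eq:
  assumes \<sigma>1: "monoid_choice X M1 \<sigma>1" and \<sigma>2: "monoid_choice X M2 \<sigma>2"
    and "loop_problem X M1 \<sigma>1 = loop_problem X M2 \<sigma>2"
  shows "\<exists>\<rho> \<in> iso M1 M2. \<forall>w \<in> lists X. \<rho> (\<sigma>1 w) = \<sigma>2 w"
proof (rule iso_of_surjections_with_same_kernel[where mul = append])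
  show "\<sigma>1 u = \<sigma>1 v \<longleftrightarrow> \<sigma>2 u = \<sigma>2 v" if "u \<in> lists X" "v \<in> lists X" for u v
    using same_kernel_if_loop_problem_eq[OF assms that] .
qed (use monoid_choiceD[OF \<sigma>1] monoid_choiceD[OF \<sigma>2] in auto)

lemma adjoin_one_monoid:
  assumes "is_semigroup S"
  shows "monoid (adjoin_one S)"
  using assms unfolding is_semigroup_def adjoin_one_def
  by unfold_locales (auto split: option.splits)

lemma monoid_choice_ext_one:
  assumes \<tau>: "semigroup_choice X S \<tau>"
  shows "monoid_choice X (adjoin_one S) (ext_one \<tau>)"
proof -
  have plus_words_iff: "w \<in> plus_words X \<longleftrightarrow> w \<in> lists X \<and> w \<noteq> []" for w
    unfolding plus_words_def by blast
  have "lists X = insert [] (plus_words X)"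
    using plus_words_iff by auto
  then have "ext_one \<tau> ` lists X = insert (ext_one \<tau> []) (ext_one \<tau> ` plus_words X)"
    by simp
  also have "\<dots> = insert None (Some ` \<tau> ` plus_words X)"
    by (auto simp: ext_one_def plus_words_iff)
  finally have "ext_one \<tau> ` lists X = insert None (Some ` \<tau> ` plus_words X)" .
  then have "ext_one \<tau> ` lists X = carrier (adjoin_one S)"
    by (simp add: adjoin_one_def semigroup_choiceD(4)[OF \<tau>])
  moreover have "ext_one \<tau> (u @ v) = ext_one \<tau> u \<otimes>\<^bsub>adjoin_one S\<^esub> ext_one \<tau> v"
    if "u \<in> lists X" "v \<in> lists X" for u v
    using that semigroup_choiceD(3)[OF \<tau>, of u v]
    by (auto simp: ext_one_def adjoin_one_def plus_words_iff)
  ultimately show ?thesis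
    unfolding monoid_choice_def
    using adjoin_one_monoid[OF semigroup_choiceD(1)[OF \<tau>]]
    by (auto simp: ext_one_def adjoin_one_def)
qed

lemma semigroup_choice_iso_if_loop_problem_eq:
  assumes \<tau>1: "semigroup_choice X S1 \<tau>1" and \<tau>2: "semigroup_choice X S2 \<tau>2"
    and L: "semigroup_loop_problem X S1 \<tau>1 = semigroup_loop_problem X S2 \<tau>2"
  shows "\<exists>\<rho> \<in> iso S1 S2. \<forall>w \<in> plus_words X. \<rho> (\<tau>1 w) = \<tau>2 w"
proof (rule iso_of_surjections_with_same_kernel[where mul = append])
  fix u v assume "u \<in> plus_words X" "v \<in> plus_words X"
  then have "u \<in> lists X" "v \<in> lists X" "u \<noteq> []" "v \<noteq> []"
    unfolding plus_words_def by auto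
  then show "\<tau>1 u = \<tau>1 v \<longleftrightarrow> \<tau>2 u = \<tau>2 v"
    using same_kernel_if_loop_problem_eq[OF monoid_choice_ext_one[OF \<tau>1] monoid_choice_ext_one[OF \<tau>2]
        _ \<open>u \<in> lists X\<close> \<open>v \<in> lists X\<close>]
      L unfolding semigroup_loop_problem_def ext_one_def by simp
qed (use semigroup_choiceD[OF \<tau>1] semigroup_choiceD[OF \<tau>2] in \<open>auto simp: plus_words_def\<close>)

theorem corollary4p3:
  fixes X :: "'x set"
    and M1 :: "('a, 'r1) monoid_scheme" and M2 :: "('b, 'r2) monoid_scheme"
    and \<sigma>1 :: "'x list \<Rightarrow> 'a" and \<sigma>2 :: "'x list \<Rightarrow> 'b"
    and S1 :: "('c, 'r3) monoid_scheme" and S2 :: "('d, 'r4) monoid_scheme"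
    and \<tau>1 :: "'x list \<Rightarrow> 'c" and \<tau>2 :: "'x list \<Rightarrow> 'd"
  assumes "finite X"
  shows "(monoid_choice X M1 \<sigma>1 \<and> monoid_choice X M2 \<sigma>2 \<and>
           loop_problem X M1 \<sigma>1 = loop_problem X M2 \<sigma>2 \<longrightarrow>
           (\<exists>\<rho> \<in> iso M1 M2. \<forall>w \<in> lists X. \<rho> (\<sigma>1 w) = \<sigma>2 w))
       \<and> (semigroup_choice X S1 \<tau>1 \<and> semigroup_choice X S2 \<tau>2 \<and>
           semigroup_loop_problem X S1 \<tau>1 = semigroup_loop_problem X S2 \<tau>2 \<longrightarrow>
           (\<exists>\<rho> \<in> iso S1 S2. \<forall>w \<in> plus_words X. \<rho> (\<tau>1 w) = \<tau>2 w))"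
  using monoid_choice_iso_if_loop_problem_eq semigroup_choice_iso_if_loop_problem_eq by blast

end
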